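(* Let $\Lambda$ be a row-finite source-free $k$-graph and let $(X, \mu)$ be a $\sigma$-finite measure space. If a $\Lambda$-projective representation of $C^*(\Lambda)$ on $L^2(X, \mu)$ is monic, then the support of any of its monic vectors $\xi$ differs from $X$ by at most a set of measure $0$.
   Context: A $k$-graph is a countable small category $\Lambda$ with a functor $d:\Lambda\to\mathbb{N}^k$ with unique factorization; row-finite/source-free: the set of paths of each degree with a given range is finite/nonempty. $C^*(\Lambda)$ is the universal $C^*$-algebra of a Cuntz–Krieger $\Lambda$-family. A $\Lambda$-semibranching function system on $(X,\mu)$: measurable $D_\lambda$, prefixing maps $\tau_\lambda:D_\lambda\to X$ with ranges $R_\lambda$, coding maps $\tau^m$ ($m\in\mathbb{N}^k$), such that for each $m$ $\{\tau_\lambda:d(\lambda)=m\}$ is a semibranching function system with coding map $\tau^m$ (finite positive measures, a.e. disjoint ranges covering $X$ a.e., positive Radon–Nikodym derivatives, $\tau^m\circ\tau_\lambda=\mathrm{id}$), $\tau_v=\mathrm{id}$ for vertices, $\tau_\lambda\tau_\nu=\tau_{\lambda\nu}$ a.e., $\tau^m\tau^n=\tau^{m+n}$. A $\Lambda$-projective system adds $f_\lambda\in L^2$ with $0\ne d(\mu\circ\tau_\lambda^{-1})/d\mu=|f_\lambda|^2$ and $f_\lambda(f_\nu\circ\tau^{d(\lambda)})=f_{\lambda\nu}$; the $\Lambda$-projective representation is $T_\lambda f=f_\lambda\cdot(f\circ\tau^{d(\lambda)})$, which satisfies $T_\lambda T_\lambda^*=M_{\chi_{R_\lambda}}$. A representation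 $\{t_\lambda\}$ on $\mathcal H$ is monic if all $t_\lambda\ne0$ and there is $\xi$ (a monic vector) with $\overline{\mathrm{span}}\{t_\lambda t_\lambda^*\xi:\lambda\in\Lambda\}=\mathcal H$. *)

theory Defs
  imports "HOL-Analysis.Analysis"
begin

text \<open>A k-graph: paths P (morphisms of a countable small category; objects are
identified with their identity morphisms), range r, source s, composition c
(c l n is defined when s l = r n), degree functor d into N^k, where N^k is
modelled as 'k \<Rightarrow> nat for a finite index type 'k with CARD('k) = k.\<close>

definition k_graph ::
  "'p set \<Rightarrow> ('p \<Rightarrow> 'p) \<Rightarrow> ('p \<Rightarrow> 'p) \<Rightarrow> ('p \<Rightarrow> 'p \<Rightarrow> 'p) \<Rightarrow> ('p \<Rightarrow> 'k::finite \<Rightarrow> nat) \<Rightarrow> bool"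
  where
  "k_graph P r s c d \<longleftrightarrow>
     countable P \<and>
     (\<forall>l\<in>P. r l \<in> P \<and> s l \<in> P \<and>
        r (r l) = r l \<and> s (r l) = r l \<and> r (s l) = s l \<and> s (s l) = s l \<and>
        d (r l) = (\<lambda>_. 0) \<and> d (s l) = (\<lambda>_. 0) \<and>
        c (r l) l = l \<and> c l (s l) = l) \<and>
     (\<forall>l\<in>P. \<forall>n\<in>P. s l = r n \<longrightarrow>
        c l n \<in> P \<and> r (c l n) = r l \<and> s (c l n) = s n \<and>
        d (c l n) = (\<lambda>i. d l i + d n i)) \<and>
     (\<forall>l\<in>P. \<forall>n\<in>P. \<forall>q\<in>P. s l = r n \<longrightarrow> s n = r q \<longrightarrow>
        c (c l n) q = c l (c n q)) \<and>
     (\<forall>l\<in>P. \<forall>m n. d l = (\<lambda>i. m i + n i) \<longrightarrow>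
        (\<exists>!ab. fst ab \<in> P \<and> snd ab \<in> P \<and> s (fst ab) = r (snd ab) \<and>
               d (fst ab) = m \<and> d (snd ab) = n \<and> c (fst ab) (snd ab) = l))"

definition vertices :: "'p set \<Rightarrow> ('p \<Rightarrow> 'p) \<Rightarrow> 'p set" where
  "vertices P r = r ` P"

definition row_finite :: "'p set \<Rightarrow> ('p \<Rightarrow> 'p) \<Rightarrow> ('p \<Rightarrow> 'k \<Rightarrow> nat) \<Rightarrow> bool" where
  "row_finite P r d \<longleftrightarrow> (\<forall>v\<in>vertices P r. \<forall>m. finite {l\<in>P. r l = v \<and> d l = m})"

definition source_free :: "'p set \<Rightarrow> ('p \<Rightarrow> 'p) \<Rightarrow> ('p \<Rightarrow> 'k \<Rightarrow> nat) \<Rightarrow> bool" where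
  "source_free P r d \<longleftrightarrow> (\<forall>v\<in>vertices P r. \<forall>m. {l\<in>P. r l = v \<and> d l = m} \<noteq> {})"

definition sbfs ::
  "'a measure \<Rightarrow> 'i set \<Rightarrow> ('i \<Rightarrow> 'a set) \<Rightarrow> ('i \<Rightarrow> 'a \<Rightarrow> 'a) \<Rightarrow> ('a \<Rightarrow> 'a) \<Rightarrow> bool"
  where
  "sbfs M I D tau code \<longleftrightarrow>
     countable I \<and> code \<in> measurable M M \<and>
     (\<forall>i\<in>I. D i \<in> sets M \<and> 0 < emeasure M (D i) \<and> emeasure M (D i) < \<infinity> \<and>
        tau i \<in> measurable (restrict_space M (D i)) M \<and>
        (\<exists>\<Phi>::'a \<Rightarrow> ennreal. \<Phi> \<in> borel_measurable M \<and>
           (\<forall>A\<in>sets M. A \<subseteq> D i \<longrightarrow>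
              tau i ` A \<in> sets M \<and>
              emeasure M (tau i ` A) = (\<integral>\<^sup>+ x. \<Phi> x * indicator A x \<partial>M)) \<and>
           (AE x in M. x \<in> D i \<longrightarrow> 0 < \<Phi> x)) \<and>
        (\<forall>x\<in>D i. code (tau i x) = x)) \<and>
     emeasure M (space M - (\<Union>i\<in>I. tau i ` D i)) = 0 \<and>
     (\<forall>i\<in>I. \<forall>j\<in>I. i \<noteq> j \<longrightarrow> emeasure M (tau i ` D i \<inter> tau j ` D j) = 0)"

definition lambda_sbfs ::
  "'a measure \<Rightarrow> 'p set \<Rightarrow> ('p \<Rightarrow> 'p) \<Rightarrow> ('p \<Rightarrow> 'p) \<Rightarrow> ('p \<Rightarrow> 'p \<Rightarrow> 'p) \<Rightarrow> ('p \<Rightarrow> 'k \<Rightarrow> nat)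
   \<Rightarrow> ('p \<Rightarrow> 'a set) \<Rightarrow> ('p \<Rightarrow> 'a \<Rightarrow> 'a) \<Rightarrow> (('k \<Rightarrow> nat) \<Rightarrow> 'a \<Rightarrow> 'a) \<Rightarrow> bool"
  where
  "lambda_sbfs M P r s c d D tau tauc \<longleftrightarrow>
     (\<forall>m. sbfs M {l\<in>P. d l = m} D tau (tauc m)) \<and>
     (\<forall>v\<in>vertices P r. \<forall>x\<in>D v. tau v x = x) \<and>
     (\<forall>l\<in>P. \<forall>n\<in>P. s l = r n \<longrightarrow>
        (AE x in M. (x \<in> D (c l n) \<longleftrightarrow> (x \<in> D n \<and> tau n x \<in> D l)) \<and>
                    (x \<in> D (c l n) \<longrightarrow> tau l (tau n x) = tau (c l n) x))) \<and>
     (\<forall>m n. \<forall>x\<in>space M. tauc m (tauc n x) = tauc (\<lambda>i. m i + n i) x)"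

definition L2 :: "'a measure \<Rightarrow> ('a \<Rightarrow> complex) set" where
  "L2 M = {g. g \<in> borel_measurable M \<and> integrable M (\<lambda>x. (cmod (g x))\<^sup>2)}"

definition l2_inner :: "'a measure \<Rightarrow> ('a \<Rightarrow> complex) \<Rightarrow> ('a \<Rightarrow> complex) \<Rightarrow> complex" where
  "l2_inner M g h = (\<integral>x. g x * cnj (h x) \<partial>M)"

definition l2_norm :: "'a measure \<Rightarrow> ('a \<Rightarrow> complex) \<Rightarrow> real" where
  "l2_norm M g = sqrt (\<integral>x. (cmod (g x))\<^sup>2 \<partial>M)"

text \<open>The Radon-Nikodym derivative of mu o tau_l^{-1} (the measure
A \<mapsto> mu {x \<in> D l. tau l x \<in> A}) with respect to mu equals |f l|^2.\<close>

definition lambda_proj ::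
  "'a measure \<Rightarrow> 'p set \<Rightarrow> ('p \<Rightarrow> 'p) \<Rightarrow> ('p \<Rightarrow> 'p) \<Rightarrow> ('p \<Rightarrow> 'p \<Rightarrow> 'p) \<Rightarrow> ('p \<Rightarrow> 'k \<Rightarrow> nat)
   \<Rightarrow> ('p \<Rightarrow> 'a set) \<Rightarrow> ('p \<Rightarrow> 'a \<Rightarrow> 'a) \<Rightarrow> (('k \<Rightarrow> nat) \<Rightarrow> 'a \<Rightarrow> 'a) \<Rightarrow> ('p \<Rightarrow> 'a \<Rightarrow> complex) \<Rightarrow> bool"
  where
  "lambda_proj M P r s c d D tau tauc f \<longleftrightarrow>
     lambda_sbfs M P r s c d D tau tauc \<and>
     (\<forall>l\<in>P. f l \<in> L2 M \<and>
        (\<forall>A\<in>sets M. emeasure M {x\<in>D l. tau l x \<in> A} =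
                     (\<integral>\<^sup>+ x. ennreal ((cmod (f l x))\<^sup>2) * indicator A x \<partial>M)) \<and>
        \<not> (AE x in M. f l x = 0)) \<and>
     (\<forall>l\<in>P. \<forall>n\<in>P. s l = r n \<longrightarrow>
        (AE x in M. f l x * f n (tauc (d l) x) = f (c l n) x))"

definition proj_rep ::
  "('p \<Rightarrow> 'a \<Rightarrow> complex) \<Rightarrow> (('k \<Rightarrow> nat) \<Rightarrow> 'a \<Rightarrow> 'a) \<Rightarrow> ('p \<Rightarrow> 'k \<Rightarrow> nat) \<Rightarrow> 'p
   \<Rightarrow> ('a \<Rightarrow> complex) \<Rightarrow> ('a \<Rightarrow> complex)" where
  "proj_rep f tauc d l g = (\<lambda>x. f l x * g (tauc (d l) x))"

definition is_adjoint ::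
  "'a measure \<Rightarrow> (('a \<Rightarrow> complex) \<Rightarrow> ('a \<Rightarrow> complex)) \<Rightarrow> (('a \<Rightarrow> complex) \<Rightarrow> ('a \<Rightarrow> complex)) \<Rightarrow> bool"
  where
  "is_adjoint M T S \<longleftrightarrow>
     (\<forall>g\<in>L2 M. T g \<in> L2 M) \<and> (\<forall>g\<in>L2 M. S g \<in> L2 M) \<and>
     (\<forall>g\<in>L2 M. \<forall>h\<in>L2 M. l2_inner M (T g) h = l2_inner M g (S h))"

definition nonzero_op :: "'a measure \<Rightarrow> (('a \<Rightarrow> complex) \<Rightarrow> ('a \<Rightarrow> complex)) \<Rightarrow> bool" where
  "nonzero_op M T \<longleftrightarrow> (\<exists>g\<in>L2 M. \<not> (AE x in M. T g x = 0))"

definition monic_vector ::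
  "'a measure \<Rightarrow> 'p set \<Rightarrow> ('p \<Rightarrow> ('a \<Rightarrow> complex) \<Rightarrow> ('a \<Rightarrow> complex)) \<Rightarrow> ('a \<Rightarrow> complex) \<Rightarrow> bool"
  where
  "monic_vector M P T xi \<longleftrightarrow>
     xi \<in> L2 M \<and>
     (\<exists>S. (\<forall>l\<in>P. is_adjoint M (T l) (S l)) \<and>
        (\<forall>g\<in>L2 M. \<forall>\<epsilon>>0. \<exists>F cf. finite F \<and> F \<subseteq> P \<and>
           l2_norm M (\<lambda>x. g x - (\<Sum>l\<in>F. cf l * T l (S l xi) x)) < \<epsilon>))"

definition monic_rep ::
  "'a measure \<Rightarrow> 'p set \<Rightarrow> ('p \<Rightarrow> ('a \<Rightarrow> complex) \<Rightarrow> ('a \<Rightarrow> complex)) \<Rightarrow> bool" where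
  "monic_rep M P T \<longleftrightarrow> (\<forall>l\<in>P. nonzero_op M (T l)) \<and> (\<exists>xi. monic_vector M P T xi)"

end

theory Submission
  imports Defs
begin

(* Let Z be the zero set of xi, T = T_lambda, S = T_lambda^* and E = tau_lambda^{-1}(Z).
   Since T (chi_E g) = chi_Z (T g), the vector w = T S xi satisfies
   <chi_Z w, w> = <chi_E S xi, S w> = conj <T (chi_E S w), xi> = conj <chi_Z T S w, xi> = 0,
   so w vanishes a.e. on Z.  Hence so does every vector in the span of the T S xi; as this span
   is dense, the indicator of Z \<inter> B (B of finite measure) is at distance at least
   mu(Z \<inter> B)^(1/2) from it, so mu(Z \<inter> B) = 0, and sigma-finiteness gives mu(Z) = 0. *)

lemma borel_measurable_cnj [measurable]:
  "f \<in> borel_measurable M \<Longrightarrow> (\<lambda>x. cnj (f x)) \<in> borel_measurable M"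
  by (rule borel_measurable_continuous_on[where f = cnj]) (auto intro: continuous_on_id)

lemma L2_measurable: "g \<in> L2 M \<Longrightarrow> g \<in> borel_measurable M"
  by (simp add: L2_def)

lemma L2_integrable_square: "g \<in> L2 M \<Longrightarrow> integrable M (\<lambda>x. (cmod (g x))\<^sup>2)"
  by (simp add: L2_def)

lemma L2_add:
  assumes "g \<in> L2 M" "h \<in> L2 M"
  shows "(\<lambda>x. g x + h x) \<in> L2 M"
proof -
  have [measurable]: "g \<in> borel_measurable M" "h \<in> borel_measurable M"
    using assms by (auto simp: L2_def)
  have "integrable M (\<lambda>x. 2 * (cmod (g x))\<^sup>2 + 2 * (cmod (h x))\<^sup>2)"
    using assms by (auto simp: L2_def)
  moreover have "(cmod (g x + h x))\<^sup>2 \<le> 2 * (cmod (g x))\<^sup>2 + 2 * (cmod (h x))\<^sup>2" for x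
  proof -
    have "(cmod (g x + h x))\<^sup>2 \<le> (cmod (g x) + cmod (h x))\<^sup>2"
      by (simp add: norm_triangle_ineq power_mono)
    also have "\<dots> \<le> 2 * (cmod (g x))\<^sup>2 + 2 * (cmod (h x))\<^sup>2"
      using zero_le_power2[of "cmod (g x) - cmod (h x)"] by (simp add: power2_eq_square algebra_simps)
    finally show ?thesis .
  qed
  ultimately show ?thesis
    unfolding L2_def by (auto intro: Bochner_Integration.integrable_bound)
qed

lemma L2_cmult:
  assumes "g \<in> L2 M"
  shows "(\<lambda>x. a * g x) \<in> L2 M"
proof -
  have "integrable M (\<lambda>x. (cmod a)\<^sup>2 * (cmod (g x))\<^sup>2)"
    using assms by (auto simp: L2_def)
  then show ?thesis
    using assms by (auto simp: L2_def norm_mult power_mult_distrib)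
qed

lemma L2_diff: "g \<in> L2 M \<Longrightarrow> h \<in> L2 M \<Longrightarrow> (\<lambda>x. g x - h x) \<in> L2 M"
  using L2_add[OF _ L2_cmult[of h M "-1"], of g] by simp

lemma L2_sum:
  assumes "finite F" "\<And>l. l \<in> F \<Longrightarrow> h l \<in> L2 M"
  shows "(\<lambda>x. \<Sum>l\<in>F. h l x) \<in> L2 M"
  using assms
proof (induction F rule: finite_induct)
  case empty
  then show ?case by (simp add: L2_def)
next
  case (insert l F)
  then show ?case using L2_add[of "h l" M] by simp
qed

lemma L2_indicator_mult:
  assumes "E \<in> sets M" "g \<in> L2 M"
  shows "(\<lambda>x. indicator E x * g x) \<in> L2 M"
proof -
  have [measurable]: "g \<in> borel_measurable M"
    using assms by (simp add: L2_def)
  have "integrable M (\<lambda>x. (cmod (g x))\<^sup>2)"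
    using assms by (simp add: L2_def)
  then show ?thesis
    unfolding L2_def using assms(1)
    by (auto intro: Bochner_Integration.integrable_bound simp: indicator_def)
qed

lemma L2_indicator:
  assumes "A \<in> sets M" "emeasure M A < \<infinity>"
  shows "(\<lambda>x. complex_of_real (indicator A x)) \<in> L2 M"
proof -
  have "(\<lambda>x. (cmod (complex_of_real (indicator A x)))\<^sup>2) = indicator A"
    by (auto simp: indicator_def)
  then show ?thesis
    unfolding L2_def using assms by (simp add: integrable_real_indicator)
qed

lemma l2_inner_commute: "l2_inner M g h = cnj (l2_inner M h g)"
  unfolding l2_inner_def Bochner_Integration.integral_cnj[symmetric] by (simp add: mult.commute)

lemma l2_inner_indicator_swap:
  "l2_inner M (\<lambda>x. indicator E x * g x) h = l2_inner M g (\<lambda>x. indicator E x * h x)"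
  unfolding l2_inner_def by (rule Bochner_Integration.integral_cong) (auto simp: indicator_def)

lemma l2_inner_cong_AE:
  assumes "AE x in M. g x = g' x"
    and "g \<in> borel_measurable M" "g' \<in> borel_measurable M" "h \<in> borel_measurable M"
  shows "l2_inner M g h = l2_inner M g' h"
  unfolding l2_inner_def using assms by (intro integral_cong_AE) auto

lemma l2_inner_indicator_self:
  "l2_inner M (\<lambda>x. indicator Z x * w x) w =
     complex_of_real (\<integral>x. indicator Z x * (cmod (w x))\<^sup>2 \<partial>M)"
  unfolding l2_inner_def integral_complex_of_real[symmetric]
  by (rule Bochner_Integration.integral_cong)
     (auto simp: indicator_def complex_norm_square[symmetric])

lemma AE_zero_on_if_l2_inner_indicator_eq_0:
  assumes "w \<in> L2 M" "Z \<in> sets M"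
    and "l2_inner M (\<lambda>x. indicator Z x * w x) w = 0"
  shows "AE x in M. x \<in> Z \<longrightarrow> w x = 0"
proof -
  have "integrable M (\<lambda>x. indicator Z x * (cmod (w x))\<^sup>2)"
    using integrable_mult_indicator[OF assms(2) L2_integrable_square[OF assms(1)]] by simp
  moreover have "(\<integral>x. indicator Z x * (cmod (w x))\<^sup>2 \<partial>M) = 0"
    using assms(3) by (simp add: l2_inner_indicator_self)
  ultimately have "AE x in M. indicator Z x * (cmod (w x))\<^sup>2 = 0"
    by (subst (asm) integral_nonneg_eq_0_iff_AE) auto
  then show ?thesis
    by (rule AE_mp) (auto simp: indicator_def)
qed

lemma adjoint_vanishes_on_zero_set:
  assumes adj: "is_adjoint M T S" and E: "E \<in> sets M" and Z: "Z \<in> sets M"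
    and intertwine: "\<And>g. g \<in> L2 M \<Longrightarrow>
      AE x in M. T (\<lambda>y. indicator E y * g y) x = indicator Z x * T g x"
    and xi: "xi \<in> L2 M" and xi_zero: "\<And>x. x \<in> Z \<Longrightarrow> xi x = 0"
  shows "AE x in M. x \<in> Z \<longrightarrow> T (S xi) x = 0"
proof -
  have TL: "\<And>g. g \<in> L2 M \<Longrightarrow> T g \<in> L2 M" and SL: "\<And>g. g \<in> L2 M \<Longrightarrow> S g \<in> L2 M"
    and TS: "\<And>g h. g \<in> L2 M \<Longrightarrow> h \<in> L2 M \<Longrightarrow> l2_inner M (T g) h = l2_inner M g (S h)"
    using adj unfolding is_adjoint_def by blast+
  define w where "w = T (S xi)"
  have wL: "w \<in> L2 M" and SwL: "S w \<in> L2 M"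
    unfolding w_def using TL SL xi by blast+
  have ESxiL: "(\<lambda>y. indicator E y * S xi y) \<in> L2 M" and ESwL: "(\<lambda>y. indicator E y * S w y) \<in> L2 M"
    using L2_indicator_mult[OF E] SL xi SwL by blast+
  note borel = L2_measurable[OF wL] L2_measurable[OF xi] Z
    L2_measurable[OF TL[OF ESxiL]] L2_measurable[OF TL[OF ESwL]] L2_measurable[OF TL[OF SwL]]
  have "l2_inner M (\<lambda>x. indicator Z x * w x) w = l2_inner M (T (\<lambda>y. indicator E y * S xi y)) w"
    using intertwine[OF SL[OF xi]] borel
    by (intro l2_inner_cong_AE) (auto simp: w_def elim: AE_mp)
  also have "\<dots> = l2_inner M (\<lambda>y. indicator E y * S xi y) (S w)"
    by (rule TS[OF ESxiL wL])
  also have "\<dots> = cnj (l2_inner M (\<lambda>y. indicator E y * S w y) (S xi))"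
    by (simp add: l2_inner_indicator_swap l2_inner_commute[of M "S xi"])
  also have "\<dots> = cnj (l2_inner M (T (\<lambda>y. indicator E y * S w y)) xi)"
    by (simp add: TS[OF ESwL xi])
  also have "l2_inner M (T (\<lambda>y. indicator E y * S w y)) xi = l2_inner M (\<lambda>x. indicator Z x * T (S w) x) xi"
    using intertwine[OF SwL] borel by (intro l2_inner_cong_AE) auto
  also have "\<dots> = 0"
    unfolding l2_inner_def
    by (subst Bochner_Integration.integral_cong[where g = "\<lambda>_. 0"]) (auto simp: indicator_def xi_zero)
  finally show ?thesis
    unfolding w_def[symmetric] by (intro AE_zero_on_if_l2_inner_indicator_eq_0[OF wL Z]) simp
qed

lemma sbfs_domain_sets: "sbfs M I D tau code \<Longrightarrow> i \<in> I \<Longrightarrow> D i \<in> sets M"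
  unfolding sbfs_def by blast

lemma sbfs_code_tau: "sbfs M I D tau code \<Longrightarrow> i \<in> I \<Longrightarrow> x \<in> D i \<Longrightarrow> code (tau i x) = x"
  unfolding sbfs_def by blast

lemma sbfs_range_sets: "sbfs M I D tau code \<Longrightarrow> i \<in> I \<Longrightarrow> tau i ` D i \<in> sets M"
  unfolding sbfs_def by blast

lemma sbfs_preimage_sets:
  assumes "sbfs M I D tau code" "i \<in> I" "Z \<in> sets M"
  shows "{y \<in> D i. tau i y \<in> Z} \<in> sets M"
proof -
  have D: "D i \<in> sets M"
    using assms(1,2) by (rule sbfs_domain_sets)
  have "tau i \<in> measurable (restrict_space M (D i)) M"
    using assms(1,2) unfolding sbfs_def by blast
  then have "tau i -` Z \<inter> D i \<in> sets (restrict_space M (D i))"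
    using measurable_sets[OF _ assms(3)] sets.sets_into_space[OF D]
    by (metis Int_absorb2 space_restrict_space)
  moreover have "tau i -` Z \<inter> D i = {y \<in> D i. tau i y \<in> Z}"
    by auto
  ultimately show ?thesis
    using D sets_restrict_space_iff[of "D i" M] sets.sets_into_space[OF D] by (auto simp: Int_absorb2)
qed

lemma lambda_proj_sbfs:
  "lambda_proj M P r s c d D tau tauc f \<Longrightarrow> sbfs M {l \<in> P. d l = m} D tau (tauc m)"
  unfolding lambda_proj_def lambda_sbfs_def by blast

lemma lambda_proj_AE_zero_off_range:
  assumes lp: "lambda_proj M P r s c d D tau tauc f" and l: "l \<in> P"
  shows "AE x in M. x \<notin> tau l ` D l \<longrightarrow> f l x = 0"
proof -
  let ?N = "space M - tau l ` D l"
  have N: "?N \<in> sets M"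
    using sbfs_range_sets[OF lambda_proj_sbfs[OF lp]] l by auto
  have [measurable]: "f l \<in> borel_measurable M"
    and "emeasure M {x \<in> D l. tau l x \<in> ?N} =
      (\<integral>\<^sup>+ x. ennreal ((cmod (f l x))\<^sup>2) * indicator ?N x \<partial>M)"
    using lp l N unfolding lambda_proj_def L2_def by blast+
  moreover have "{x \<in> D l. tau l x \<in> ?N} = {}"
    by auto
  ultimately have "(\<integral>\<^sup>+ x. ennreal ((cmod (f l x))\<^sup>2) * indicator ?N x \<partial>M) = 0"
    by (metis emeasure_empty)
  then have "AE x in M. ennreal ((cmod (f l x))\<^sup>2) * indicator ?N x = 0"
    using N by (subst (asm) nn_integral_0_iff_AE) auto
  then show ?thesis
    by (rule AE_mp) (auto simp: indicator_def)
qed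

lemma proj_rep_indicator_preimage:
  assumes lp: "lambda_proj M P r s c d D tau tauc f" and l: "l \<in> P"
  shows "AE x in M. proj_rep f tauc d l (\<lambda>y. indicator {y \<in> D l. tau l y \<in> Z} y * g y) x
    = indicator Z x * proj_rep f tauc d l g x"
  using lambda_proj_AE_zero_off_range[OF lp l]
proof (rule AE_mp, intro AE_I2 impI)
  fix x
  assume "x \<notin> tau l ` D l \<longrightarrow> f l x = 0"
  moreover have "tauc (d l) (tau l y) = y" if "y \<in> D l" for y
    using sbfs_code_tau[OF lambda_proj_sbfs[OF lp]] l that by blast
  ultimately show "proj_rep f tauc d l (\<lambda>y. indicator {y \<in> D l. tau l y \<in> Z} y * g y) x
    = indicator Z x * proj_rep f tauc d l g x"
    by (auto simp: proj_rep_def indicator_def)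
qed

lemma integral_indicator_square_le_l2_norm:
  assumes "q \<in> L2 M" "Z \<in> sets M"
  shows "(\<integral>x. indicator Z x * (cmod (q x))\<^sup>2 \<partial>M) \<le> (l2_norm M q)\<^sup>2"
proof -
  have q: "integrable M (\<lambda>x. (cmod (q x))\<^sup>2)"
    using assms(1) by (rule L2_integrable_square)
  have "(\<integral>x. indicator Z x * (cmod (q x))\<^sup>2 \<partial>M) \<le> (\<integral>x. (cmod (q x))\<^sup>2 \<partial>M)"
    using integrable_mult_indicator[OF assms(2) q] q
    by (intro integral_mono) (auto simp: indicator_def)
  also have "\<dots> = (l2_norm M q)\<^sup>2"
    unfolding l2_norm_def by simp
  finally show ?thesis .
qed

lemma null_on_if_dense_span_vanishes:
  assumes wL: "\<And>l. l \<in> P \<Longrightarrow> w l \<in> L2 M"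
    and dense: "\<forall>g\<in>L2 M. \<forall>\<epsilon>>0. \<exists>F cf. finite F \<and> F \<subseteq> P \<and>
      l2_norm M (\<lambda>x. g x - (\<Sum>l\<in>F. cf l * w l x)) < \<epsilon>"
    and vanish: "\<And>l. l \<in> P \<Longrightarrow> AE x in M. x \<in> Z \<longrightarrow> w l x = 0"
    and Z: "Z \<in> sets M" and B: "B \<in> sets M" "emeasure M B < \<infinity>"
  shows "emeasure M (Z \<inter> B) = 0"
proof -
  have ZB: "Z \<inter> B \<in> sets M" "emeasure M (Z \<inter> B) < \<infinity>"
    using Z B emeasure_mono[of "Z \<inter> B" B M] by auto
  define g where "g x = complex_of_real (indicator (Z \<inter> B) x)" for x
  have gL: "g \<in> L2 M"
    unfolding g_def using ZB by (rule L2_indicator)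
  have small: "measure M (Z \<inter> B) < \<epsilon>\<^sup>2" if "\<epsilon> > 0" for \<epsilon>
  proof -
    obtain F cf where F: "finite F" "F \<subseteq> P"
      and close: "l2_norm M (\<lambda>x. g x - (\<Sum>l\<in>F. cf l * w l x)) < \<epsilon>"
      using dense gL \<open>\<epsilon> > 0\<close> by blast
    define q where "q x = g x - (\<Sum>l\<in>F. cf l * w l x)" for x
    have qL: "q \<in> L2 M"
      unfolding q_def using F wL by (intro L2_diff[OF gL] L2_sum L2_cmult) auto
    have [measurable]: "q \<in> borel_measurable M"
      using qL by (rule L2_measurable)
    have "AE x in M. \<forall>l\<in>F. x \<in> Z \<longrightarrow> w l x = 0"
      using F vanish by (intro AE_finite_allI) auto
    then have "AE x in M. indicator Z x * (cmod (q x))\<^sup>2 = indicator (Z \<inter> B) x"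
      by (rule AE_mp) (auto simp: q_def g_def indicator_def)
    then have "measure M (Z \<inter> B) = (\<integral>x. indicator Z x * (cmod (q x))\<^sup>2 \<partial>M)"
      using Z ZB(1) sets.sets_into_space[OF ZB(1)]
      by (subst integral_cong_AE[where g = "indicator (Z \<inter> B)"]) (auto simp: Int_absorb2)
    also have "\<dots> \<le> (l2_norm M q)\<^sup>2"
      using qL Z by (rule integral_indicator_square_le_l2_norm)
    also have "\<dots> < \<epsilon>\<^sup>2"
      using close[folded q_def] by (intro power_strict_mono) (auto simp: l2_norm_def)
    finally show ?thesis .
  qed
  have "measure M (Z \<inter> B) = 0"
  proof (rule ccontr)
    assume "measure M (Z \<inter> B) \<noteq> 0"
    then have "measure M (Z \<inter> B) > 0"
      using measure_nonneg[of M "Z \<inter> B"] by linarith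
    then show False
      using small[of "sqrt (measure M (Z \<inter> B))"] by simp
  qed
  then show ?thesis
    using ZB(2) by (simp add: emeasure_eq_ennreal_measure)
qed

lemma (in sigma_finite_measure) emeasure_eq_0_if_locally_null:
  assumes Z: "Z \<in> sets M"
    and null: "\<And>B. B \<in> sets M \<Longrightarrow> emeasure M B < \<infinity> \<Longrightarrow> emeasure M (Z \<inter> B) = 0"
  shows "emeasure M Z = 0"
proof -
  obtain A :: "nat \<Rightarrow> 'a set"
    where A: "range A \<subseteq> sets M" "(\<Union>i. A i) = space M" "\<And>i. emeasure M (A i) \<noteq> \<infinity>"
    using sigma_finite by metis
  then have "Z = (\<Union>i. Z \<inter> A i)"
    using sets.sets_into_space[OF Z] by auto
  also have "emeasure M \<dots> = 0"
    using A Z by (intro emeasure_UN_eq_0 null) (auto simp: less_top)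
  finally show ?thesis .
qed

theorem proposition3p5:
  fixes P :: "'p set" and r s :: "'p \<Rightarrow> 'p" and c :: "'p \<Rightarrow> 'p \<Rightarrow> 'p"
    and d :: "'p \<Rightarrow> 'k::finite \<Rightarrow> nat"
    and M :: "'a measure" and D :: "'p \<Rightarrow> 'a set" and tau :: "'p \<Rightarrow> 'a \<Rightarrow> 'a"
    and tauc :: "('k \<Rightarrow> nat) \<Rightarrow> 'a \<Rightarrow> 'a" and f :: "'p \<Rightarrow> 'a \<Rightarrow> complex"
    and xi :: "'a \<Rightarrow> complex"
  assumes "k_graph P r s c d"
    and "row_finite P r d"
    and "source_free P r d"
    and "sigma_finite_measure M"
    and "lambda_proj M P r s c d D tau tauc f"
    and "monic_rep M P (proj_rep f tauc d)"
    and "monic_vector M P (proj_rep f tauc d) xi"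
  shows "emeasure M {x \<in> space M. xi x = 0} = 0"
proof -
  interpret sigma_finite_measure M by fact
  obtain S where xi: "xi \<in> L2 M" and adj: "\<forall>l\<in>P. is_adjoint M (proj_rep f tauc d l) (S l)"
    and dense: "\<forall>g\<in>L2 M. \<forall>\<epsilon>>0. \<exists>F cf. finite F \<and> F \<subseteq> P \<and>
      l2_norm M (\<lambda>x. g x - (\<Sum>l\<in>F. cf l * proj_rep f tauc d l (S l xi) x)) < \<epsilon>"
    using assms(7) unfolding monic_vector_def by blast
  define Z where "Z = {x \<in> space M. xi x = 0}"
  have [measurable]: "xi \<in> borel_measurable M"
    using xi by (rule L2_measurable)
  have Z: "Z \<in> sets M"
    unfolding Z_def by measurable
  have vanish: "AE x in M. x \<in> Z \<longrightarrow> proj_rep f tauc d l (S l xi) x = 0" if l: "l \<in> P" for l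
  proof (rule adjoint_vanishes_on_zero_set[OF bspec[OF adj l] _ Z _ xi])
    show "{y \<in> D l. tau l y \<in> Z} \<in> sets M"
      using sbfs_preimage_sets[OF lambda_proj_sbfs[OF assms(5)] _ Z] l by blast
    show "AE x in M. proj_rep f tauc d l (\<lambda>y. indicator {y \<in> D l. tau l y \<in> Z} y * g y) x =
      indicator Z x * proj_rep f tauc d l g x" for g
      by (rule proj_rep_indicator_preimage[OF assms(5) l])
  qed (simp add: Z_def)
  have L2: "proj_rep f tauc d l (S l xi) \<in> L2 M" if "l \<in> P" for l
    using bspec[OF adj that] xi unfolding is_adjoint_def by blast
  show ?thesis
    unfolding Z_def[symmetric]
    using null_on_if_dense_span_vanishes[OF L2 dense vanish Z] by (rule emeasure_eq_0_if_locally_null[OF Z])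
qed

end
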